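(* Let $H>0$ and $S_H=\{z\in\mathbb{C}:\,|\operatorname{Im} z|\le H\}$. For every $m\in\mathbb{N}$ there exists a function $\Psi_m\in L^1(\mathbb{R})$ with compact support such that its c-Fourier transform $\hat\Psi_m^c(z)=\int_{\mathbb{R}}\Psi_m(t)e^{-2\pi i z t}\,dt$ satisfies, for some constant $C>0$, $$|\hat\Psi_m^c(z)|\le C(\max\{1,|z|\})^{-m}\quad\text{for all } z\in S_H,$$ and $\operatorname{Re}\hat\Psi_m^c(z)>0$ for all $z\in S_H$. *)

theory Defs
  imports "HOL-Analysis.Analysis"
begin

definition c_fourier :: "(real \<Rightarrow> complex) \<Rightarrow> complex \<Rightarrow> complex" where
  "c_fourier Psi z = (LINT t|lborel. Psi t * exp (- (2 * complex_of_real pi * \<i> * z * complex_of_real t)))"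

definition strip :: "real \<Rightarrow> complex set" where
  "strip H = {z. \<bar>Im z\<bar> \<le> H}"

end

theory Submission
  imports Defs
begin

text \<open>
  The building block is the kernel g(t) = (pi/A) (exp(-2 pi A |t|) - exp(-2 pi A (2 - |t|))) on
  [-1, 1].  Its first term alone, on the whole line, has transform 1/(z^2 + A^2); subtracting its
  reflection in |t| = 1 cuts it off outside [-1, 1] and multiplies the transform by
  (1 - V u) (1 - V/u), where V = exp(-2 pi A) and u = exp(-2 pi i z).  On the strip |Im z| \<le> H
  both V u and V/u are exponentially small in A - H, and for A large the number z^2 + A^2 lies in a
  thin sector around the positive axis, with real part p \<ge> |z|^2 + 1.  So the transform of g is
  w/p with w close to 1.  The (m+1)-fold convolution power of g is supported in [-(m+1), m+1], and
  its transform (w/p)^(m+1) has positive real part as soon as |w - 1| < 1/(2(m+1)), and is at most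
  8^(m+1) / (|z|^2 + 1)^(m+1).
\<close>

definition fourier_kernel :: "complex \<Rightarrow> real \<Rightarrow> complex" where
  "fourier_kernel z t = exp (- (2 * complex_of_real pi * \<i> * z * complex_of_real t))"

lemma c_fourier_altdef: "c_fourier Psi z = (LINT t|lborel. Psi t * fourier_kernel z t)"
  unfolding c_fourier_def fourier_kernel_def ..

lemma fourier_kernel_measurable [measurable]: "fourier_kernel z \<in> borel_measurable borel"
  unfolding fourier_kernel_def by measurable

lemma norm_fourier_kernel: "cmod (fourier_kernel z t) = exp (2 * pi * Im z * t)"
  unfolding fourier_kernel_def by (simp add: algebra_simps)

lemma norm_fourier_kernel_le:
  assumes "\<bar>t\<bar> \<le> R"
  shows "cmod (fourier_kernel z t) \<le> exp (2 * pi * \<bar>Im z\<bar> * R)"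
proof -
  have "Im z * t \<le> \<bar>Im z\<bar> * \<bar>t\<bar>"
    by (metis abs_ge_self abs_mult)
  also have "\<dots> \<le> \<bar>Im z\<bar> * R"
    using assms by (simp add: mult_left_mono)
  finally have "Im z * t \<le> \<bar>Im z\<bar> * R" .
  then show ?thesis
    unfolding norm_fourier_kernel by (simp add: mult.assoc)
qed

lemma fourier_kernel_add: "fourier_kernel z (s + t) = fourier_kernel z s * fourier_kernel z t"
  unfolding fourier_kernel_def by (simp add: algebra_simps flip: exp_add)

lemma of_real_exp_mult_fourier_kernel:
  "complex_of_real (exp (a * t)) * fourier_kernel z t
     = exp (t *\<^sub>R (complex_of_real a - 2 * complex_of_real pi * \<i> * z))"
  unfolding fourier_kernel_def scaleR_conv_of_real of_real_exp exp_add[symmetric]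
  by (simp add: algebra_simps)

definition bounded_compact_supp :: "real \<Rightarrow> real \<Rightarrow> (real \<Rightarrow> complex) \<Rightarrow> bool" where
  "bounded_compact_supp R B f \<longleftrightarrow>
     f \<in> borel_measurable borel \<and> (\<forall>t. cmod (f t) \<le> B) \<and> (\<forall>t. R < \<bar>t\<bar> \<longrightarrow> f t = 0)"

lemma bounded_compact_suppD:
  assumes "bounded_compact_supp R B f"
  shows "f \<in> borel_measurable borel" "cmod (f t) \<le> B" "R < \<bar>t\<bar> \<Longrightarrow> f t = 0" "0 \<le> B"
  using assms norm_ge_zero order_trans unfolding bounded_compact_supp_def by blast+

lemma bounded_compact_supp_integrable:
  assumes "bounded_compact_supp R B f"
  shows "integrable lborel f"
proof (rule integrableI_bounded_set[where A = "{-R..R}" and B = B])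
  show "f \<in> borel_measurable lborel"
    using bounded_compact_suppD(1)[OF assms] by simp
  show "AE t in lborel. t \<in> {-R..R} \<longrightarrow> norm (f t) \<le> B"
    using bounded_compact_suppD(2)[OF assms] by (intro AE_I2 impI)
  show "AE t in lborel. t \<notin> {-R..R} \<longrightarrow> f t = 0"
    using bounded_compact_suppD(3)[OF assms] by (intro AE_I2 impI) (auto simp: abs_le_iff)
qed (simp_all add: emeasure_lborel_Icc_eq)

lemma norm_integral_bounded_compact_supp:
  assumes f: "bounded_compact_supp R B f" and "0 \<le> R"
  shows "cmod (LINT t|lborel. f t) \<le> B * (2 * R)"
proof -
  have "cmod (LINT t|lborel. f t) \<le> (LINT t|lborel. indicator {-R..R} t * B)"
  proof (rule Bochner_Integration.integral_norm_bound_integral)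
    show "integrable lborel (\<lambda>t. indicator {-R..R} t * B :: real)"
      by (intro integrable_mult_left integrable_real_indicator) (auto simp: emeasure_lborel_Icc_eq)
    show "norm (f t) \<le> indicator {-R..R} t * B" for t
      using bounded_compact_suppD(2,3)[OF f, of t] by (cases "\<bar>t\<bar> \<le> R") (auto simp: abs_le_iff)
  qed (rule bounded_compact_supp_integrable[OF f])
  also have "\<dots> = B * (2 * R)"
    using \<open>0 \<le> R\<close> by (simp add: measure_def emeasure_lborel_Icc_eq)
  finally show ?thesis .
qed

lemma bounded_compact_supp_mult_fourier_kernel:
  assumes f: "bounded_compact_supp R B f"
  shows "bounded_compact_supp R (B * exp (2 * pi * \<bar>Im z\<bar> * R)) (\<lambda>t. f t * fourier_kernel z t)"
  unfolding bounded_compact_supp_def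
proof (intro conjI allI impI)
  show "(\<lambda>t. f t * fourier_kernel z t) \<in> borel_measurable borel"
    using bounded_compact_suppD(1)[OF f] by measurable
  show "cmod (f t * fourier_kernel z t) \<le> B * exp (2 * pi * \<bar>Im z\<bar> * R)" for t
  proof (cases "\<bar>t\<bar> \<le> R")
    case True
    have "cmod (fourier_kernel z t) \<le> exp (2 * pi * \<bar>Im z\<bar> * R)"
      using True by (rule norm_fourier_kernel_le)
    with bounded_compact_suppD(2)[OF f, of t] bounded_compact_suppD(4)[OF f] show ?thesis
      unfolding norm_mult by (simp add: mult_mono)
  next
    case False
    then show ?thesis
      using bounded_compact_suppD(3,4)[OF f] by simp
  qed
qed (use bounded_compact_suppD(3)[OF f] in simp)

lemma c_fourier_eq_integral_Icc:
  assumes f: "bounded_compact_supp R B f"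
  shows "c_fourier f z = integral {-R..R} (\<lambda>t. f t * fourier_kernel z t)"
proof -
  note fk = bounded_compact_supp_mult_fourier_kernel[OF f, of z]
  have restrict:
    "(\<lambda>t. f t * fourier_kernel z t) = (\<lambda>t. indicator {-R..R} t *\<^sub>R (f t * fourier_kernel z t))"
    using bounded_compact_suppD(3)[OF f] by (auto simp: indicator_def abs_le_iff fun_eq_iff not_le)
  have "set_integrable lborel {-R..R} (\<lambda>t. f t * fourier_kernel z t)"
    unfolding set_integrable_def restrict[symmetric] by (rule bounded_compact_supp_integrable[OF fk])
  then have "(LINT t:{-R..R}|lborel. f t * fourier_kernel z t)
      = integral {-R..R} (\<lambda>t. f t * fourier_kernel z t)"
    by (rule set_borel_integral_eq_integral(2))
  then show ?thesis
    unfolding c_fourier_altdef set_lebesgue_integral_def restrict[symmetric] .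
qed

definition convolution :: "(real \<Rightarrow> complex) \<Rightarrow> (real \<Rightarrow> complex) \<Rightarrow> real \<Rightarrow> complex" where
  "convolution f h t = (LINT s|lborel. f s * h (t - s))"

lemma convolution_measurable [measurable]:
  assumes [measurable]: "f \<in> borel_measurable borel" "h \<in> borel_measurable borel"
  shows "convolution f h \<in> borel_measurable borel"
proof -
  have "(\<lambda>t. LINT s|lborel. f s * h (t - s)) \<in> borel_measurable borel"
    by (rule lborel.borel_measurable_lebesgue_integral) measurable
  then show ?thesis
    unfolding convolution_def[abs_def] .
qed

lemma bounded_compact_supp_convolution:
  assumes f: "bounded_compact_supp R1 B1 f" and h: "bounded_compact_supp R2 B2 h" and "0 \<le> R1"
  shows "bounded_compact_supp (R1 + R2) (B1 * B2 * (2 * R1)) (convolution f h)"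
  unfolding bounded_compact_supp_def
proof (intro conjI allI impI)
  note [measurable] = bounded_compact_suppD(1)[OF f] bounded_compact_suppD(1)[OF h]
  show "convolution f h \<in> borel_measurable borel"
    by measurable
  fix t
  have "bounded_compact_supp R1 (B1 * B2) (\<lambda>s. f s * h (t - s))"
    unfolding bounded_compact_supp_def norm_mult
    using bounded_compact_suppD(2-4)[OF f] bounded_compact_suppD(2,4)[OF h]
    by (auto intro: mult_mono)
  then show "cmod (convolution f h t) \<le> B1 * B2 * (2 * R1)"
    unfolding convolution_def using \<open>0 \<le> R1\<close> by (rule norm_integral_bounded_compact_supp)
  assume "R1 + R2 < \<bar>t\<bar>"
  then have "f s * h (t - s) = 0" for s
    using bounded_compact_suppD(3)[OF f, of s] bounded_compact_suppD(3)[OF h, of "t - s"] by force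
  then have "(\<lambda>s. f s * h (t - s)) = (\<lambda>s. 0)"
    by (rule ext)
  then show "convolution f h t = 0"
    unfolding convolution_def by simp
qed

lemma integrable_convolution_fourier_integrand:
  assumes f: "bounded_compact_supp R1 B1 f" and h: "bounded_compact_supp R2 B2 h"
    and "0 \<le> R1" "0 \<le> R2"
  shows "integrable (lborel \<Otimes>\<^sub>M lborel) (\<lambda>(s, t). f s * h (t - s) * fourier_kernel z t)"
    (is "integrable _ (case_prod ?F)")
proof -
  note [measurable] = bounded_compact_suppD(1)[OF f] bounded_compact_suppD(1)[OF h]
  define S where "S = {-R1..R1} \<times> {-(R1 + R2)..R1 + R2}"
  define K where "K = B1 * B2 * exp (2 * pi * \<bar>Im z\<bar> * (R1 + R2))"
  have "norm (?F s t) \<le> K" if "(s, t) \<in> S" for s t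
  proof -
    have "cmod (f s) * cmod (h (t - s)) \<le> B1 * B2"
      by (rule mult_mono[OF bounded_compact_suppD(2)[OF f] bounded_compact_suppD(2)[OF h]
            bounded_compact_suppD(4)[OF f] norm_ge_zero])
    moreover have "cmod (fourier_kernel z t) \<le> exp (2 * pi * \<bar>Im z\<bar> * (R1 + R2))"
      using that by (intro norm_fourier_kernel_le) (auto simp: S_def)
    moreover have "0 \<le> B1 * B2"
      using bounded_compact_suppD(4)[OF f] bounded_compact_suppD(4)[OF h] by simp
    ultimately show ?thesis
      unfolding K_def norm_mult by (rule mult_mono) simp
  qed
  moreover have "?F s t = 0" if "(s, t) \<notin> S" for s t
    using that bounded_compact_suppD(3)[OF f, of s] bounded_compact_suppD(3)[OF h, of "t - s"]
    unfolding S_def by (force simp: abs_le_iff)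
  moreover have "emeasure (lborel \<Otimes>\<^sub>M lborel) S < \<infinity>"
    using \<open>0 \<le> R1\<close> \<open>0 \<le> R2\<close> unfolding S_def
    by (simp add: lborel.emeasure_pair_measure_Times emeasure_lborel_Icc_eq ennreal_mult_less_top)
  moreover have "S \<in> sets (lborel \<Otimes>\<^sub>M lborel)"
    unfolding S_def by (intro pair_measureI) auto
  ultimately show ?thesis
    by (intro integrableI_bounded_set[where A = S and B = K]) (auto intro!: AE_I2)
qed

lemma c_fourier_convolution:
  assumes f: "bounded_compact_supp R1 B1 f" and h: "bounded_compact_supp R2 B2 h"
    and "0 \<le> R1" "0 \<le> R2"
  shows "c_fourier (convolution f h) z = c_fourier f z * c_fourier h z"
proof -
  define F where "F s t = f s * h (t - s) * fourier_kernel z t" for s t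
  have "(LINT t|lborel. LINT s|lborel. F s t) = (LINT s|lborel. LINT t|lborel. F s t)"
    using integrable_convolution_fourier_integrand[OF assms, of z] unfolding F_def
    by (intro lborel_pair.Fubini_integral) (simp add: case_prod_beta')
  moreover have "c_fourier (convolution f h) z = (LINT t|lborel. LINT s|lborel. F s t)"
    unfolding c_fourier_altdef convolution_def F_def by simp
  moreover have "F s t = f s * fourier_kernel z s * (h (t - s) * fourier_kernel z (t - s))" for s t
    using fourier_kernel_add[of z s "t - s"] unfolding F_def by (simp add: algebra_simps)
  moreover have "(LINT t|lborel. h (t - s) * fourier_kernel z (t - s)) = c_fourier h z" for s
    using lborel_integral_real_affine[of 1 "\<lambda>t. h t * fourier_kernel z t" "-s"]
    by (simp add: c_fourier_altdef)
  ultimately show ?thesis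
    by (simp add: c_fourier_altdef)
qed

text \<open>\<open>conv_power f n\<close> is the (n+1)-fold convolution power of \<open>f\<close>.\<close>

fun conv_power :: "(real \<Rightarrow> complex) \<Rightarrow> nat \<Rightarrow> real \<Rightarrow> complex" where
  "conv_power f 0 = f"
| "conv_power f (Suc n) = convolution f (conv_power f n)"

lemma bounded_compact_supp_conv_power:
  assumes "bounded_compact_supp R B f" "0 \<le> R"
  shows "\<exists>B'. bounded_compact_supp ((real n + 1) * R) B' (conv_power f n)"
proof (induction n)
  case 0
  then show ?case
    using assms(1) by auto
next
  case (Suc n)
  then obtain B' where "bounded_compact_supp ((real n + 1) * R) B' (conv_power f n)"
    by blast
  from bounded_compact_supp_convolution[OF assms(1) this assms(2)] show ?case
    by (auto simp: algebra_simps)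
qed

lemma c_fourier_conv_power:
  assumes "bounded_compact_supp R B f" "0 \<le> R"
  shows "c_fourier (conv_power f n) z = c_fourier f z ^ Suc n"
proof (induction n)
  case (Suc n)
  obtain B' where "bounded_compact_supp ((real n + 1) * R) B' (conv_power f n)"
    using bounded_compact_supp_conv_power[OF assms] by blast
  with Suc.IH show ?case
    using c_fourier_convolution[OF assms(1) _ assms(2)] assms(2) by simp
qed simp

lemma has_integral_exp_scaleR:
  fixes b :: complex
  assumes "b \<noteq> 0" "p \<le> q"
  shows "((\<lambda>t. exp (t *\<^sub>R b)) has_integral (exp (q *\<^sub>R b) - exp (p *\<^sub>R b)) / b) {p..q}"
proof -
  have "((\<lambda>t. exp (t *\<^sub>R b)) has_integral (1 / b) * exp (q *\<^sub>R b) - (1 / b) * exp (p *\<^sub>R b)) {p..q}"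
  proof (rule fundamental_theorem_of_calculus[OF \<open>p \<le> q\<close>])
    fix t
    show "((\<lambda>t. (1 / b) * exp (t *\<^sub>R b)) has_vector_derivative exp (t *\<^sub>R b)) (at t within {p..q})"
      using has_vector_derivative_mult_right[OF exp_scaleR_has_vector_derivative_right[where A = b],
          where a = "1 / b"] \<open>b \<noteq> 0\<close>
      by simp
  qed
  then show ?thesis
    by (simp add: diff_divide_distrib)
qed

definition exp_kernel :: "real \<Rightarrow> real \<Rightarrow> complex" where
  "exp_kernel A t = (if \<bar>t\<bar> \<le> 1
     then complex_of_real (pi / A * (exp (- 2 * pi * A * \<bar>t\<bar>) - exp (- 2 * pi * A * (2 - \<bar>t\<bar>))))
     else 0)"

lemma bounded_compact_supp_exp_kernel:
  assumes "0 < A"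
  shows "bounded_compact_supp 1 (pi / A) (exp_kernel A)"
  unfolding bounded_compact_supp_def
proof (intro conjI allI impI)
  show "exp_kernel A \<in> borel_measurable borel"
    unfolding exp_kernel_def[abs_def] by measurable
  show "cmod (exp_kernel A t) \<le> pi / A" for t
  proof (cases "\<bar>t\<bar> \<le> 1")
    case True
    have "exp (- 2 * pi * A * (2 - \<bar>t\<bar>)) \<le> exp (- 2 * pi * A * \<bar>t\<bar>)"
      using True \<open>0 < A\<close> by (simp add: mult_left_mono)
    moreover have "exp (- 2 * pi * A * \<bar>t\<bar>) \<le> 1"
      using \<open>0 < A\<close> by (simp add: mult_nonneg_nonneg)
    ultimately have diff_le: "\<bar>exp (- 2 * pi * A * \<bar>t\<bar>) - exp (- 2 * pi * A * (2 - \<bar>t\<bar>))\<bar> \<le> 1"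
      by (smt (verit) exp_gt_zero)
    then have "\<bar>pi / A * (exp (- 2 * pi * A * \<bar>t\<bar>) - exp (- 2 * pi * A * (2 - \<bar>t\<bar>)))\<bar> \<le> pi / A"
      using mult_left_le[OF diff_le, of "pi / A"] \<open>0 < A\<close> by (simp add: abs_mult)
    then show ?thesis
      unfolding exp_kernel_def if_P[OF True] norm_of_real .
  qed (simp add: exp_kernel_def \<open>0 < A\<close> less_imp_le)
qed (simp add: exp_kernel_def)

lemma exp_kernel_mult_fourier_kernel:
  fixes A t :: real and z :: complex
  defines "b1 \<equiv> complex_of_real (- 2 * pi * A) - 2 * complex_of_real pi * \<i> * z"
    and "b2 \<equiv> complex_of_real (2 * pi * A) - 2 * complex_of_real pi * \<i> * z"
    and "V \<equiv> complex_of_real (exp (- 2 * pi * A))"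
  shows "t \<in> {0..1} \<Longrightarrow>
      exp_kernel A t * fourier_kernel z t = complex_of_real (pi / A) * (exp (t *\<^sub>R b1) - V\<^sup>2 * exp (t *\<^sub>R b2))"
    and "t \<in> {-1..0} \<Longrightarrow>
      exp_kernel A t * fourier_kernel z t = complex_of_real (pi / A) * (exp (t *\<^sub>R b2) - V\<^sup>2 * exp (t *\<^sub>R b1))"
proof -
  have reflect: "exp (- 2 * pi * A * (2 - s)) = (exp (- 2 * pi * A))\<^sup>2 * exp (2 * pi * A * s)" for s
    by (simp add: power2_eq_square algebra_simps flip: exp_add)
  show "exp_kernel A t * fourier_kernel z t = complex_of_real (pi / A) * (exp (t *\<^sub>R b1) - V\<^sup>2 * exp (t *\<^sub>R b2))"
    if "t \<in> {0..1}"
  proof -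
    have "\<bar>t\<bar> = t" "\<bar>t\<bar> \<le> 1"
      using that by auto
    then have kt: "exp_kernel A t = complex_of_real (pi / A)
        * (complex_of_real (exp (- 2 * pi * A * t)) - V\<^sup>2 * complex_of_real (exp (2 * pi * A * t)))"
      unfolding exp_kernel_def V_def reflect by simp
    have "exp_kernel A t * fourier_kernel z t = complex_of_real (pi / A)
        * (complex_of_real (exp (- 2 * pi * A * t)) * fourier_kernel z t
           - V\<^sup>2 * (complex_of_real (exp (2 * pi * A * t)) * fourier_kernel z t))"
      unfolding kt by (simp add: algebra_simps)
    then show ?thesis
      unfolding b1_def b2_def of_real_exp_mult_fourier_kernel .
  qed
  show "exp_kernel A t * fourier_kernel z t = complex_of_real (pi / A) * (exp (t *\<^sub>R b2) - V\<^sup>2 * exp (t *\<^sub>R b1))"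
    if "t \<in> {-1..0}"
  proof -
    have "\<bar>t\<bar> = - t" "\<bar>t\<bar> \<le> 1"
      using that by auto
    then have kt: "exp_kernel A t = complex_of_real (pi / A)
        * (complex_of_real (exp (2 * pi * A * t)) - V\<^sup>2 * complex_of_real (exp (- 2 * pi * A * t)))"
      unfolding exp_kernel_def V_def reflect by simp
    have "exp_kernel A t * fourier_kernel z t = complex_of_real (pi / A)
        * (complex_of_real (exp (2 * pi * A * t)) * fourier_kernel z t
           - V\<^sup>2 * (complex_of_real (exp (- 2 * pi * A * t)) * fourier_kernel z t))"
      unfolding kt by (simp add: algebra_simps)
    then show ?thesis
      unfolding b1_def b2_def of_real_exp_mult_fourier_kernel .
  qed
qed

lemma exp_kernel_partial_fractions:
  fixes A :: real and z :: complex
  assumes "0 < A" "\<bar>Im z\<bar> < A"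
  defines "b1 \<equiv> complex_of_real (- 2 * pi * A) - 2 * complex_of_real pi * \<i> * z"
    and "b2 \<equiv> complex_of_real (2 * pi * A) - 2 * complex_of_real pi * \<i> * z"
  shows "b1 \<noteq> 0" "b2 \<noteq> 0"
    and "complex_of_real (pi / A) * (1 / b2 - 1 / b1) = 1 / (z\<^sup>2 + (complex_of_real A)\<^sup>2)"
proof -
  have "Re b1 = 2 * pi * (Im z - A)" "Re b2 = 2 * pi * (A + Im z)"
    by (simp_all add: b1_def b2_def algebra_simps)
  moreover have "Im z - A < 0" "0 < A + Im z"
    using assms(2) by linarith+
  ultimately have "Re b1 < 0" "0 < Re b2"
    by (simp_all add: mult_pos_neg)
  then show "b1 \<noteq> 0" "b2 \<noteq> 0"
    by auto
  define q where "q = z\<^sup>2 + (complex_of_real A)\<^sup>2"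
  have prod: "b1 * b2 = - 4 * (complex_of_real pi)\<^sup>2 * q"
    by (simp add: b1_def b2_def q_def algebra_simps power2_eq_square)
  have "q \<noteq> 0"
    using prod \<open>b1 \<noteq> 0\<close> \<open>b2 \<noteq> 0\<close> by auto
  have "1 / b2 - 1 / b1 = (b1 - b2) / (b1 * b2)"
    using \<open>b1 \<noteq> 0\<close> \<open>b2 \<noteq> 0\<close> by (simp add: field_simps)
  also have "\<dots> = (4 * complex_of_real pi * complex_of_real A) / (4 * (complex_of_real pi)\<^sup>2 * q)"
    unfolding prod by (simp add: b1_def b2_def)
  finally have diff:
    "1 / b2 - 1 / b1 = (4 * complex_of_real pi * complex_of_real A) / (4 * (complex_of_real pi)\<^sup>2 * q)" .
  show "complex_of_real (pi / A) * (1 / b2 - 1 / b1) = 1 / (z\<^sup>2 + (complex_of_real A)\<^sup>2)"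
    unfolding diff q_def[symmetric] using \<open>q \<noteq> 0\<close> \<open>0 < A\<close> by (simp add: field_simps power2_eq_square)
qed

lemma c_fourier_exp_kernel:
  assumes "0 < A" "\<bar>Im z\<bar> < A"
  shows "c_fourier (exp_kernel A) z =
    (1 - exp (- 2 * pi * A) * fourier_kernel z 1) * (1 - exp (- 2 * pi * A) / fourier_kernel z 1)
      / (z\<^sup>2 + (complex_of_real A)\<^sup>2)"
proof -
  define b1 where "b1 = complex_of_real (- 2 * pi * A) - 2 * complex_of_real pi * \<i> * z"
  define b2 where "b2 = complex_of_real (2 * pi * A) - 2 * complex_of_real pi * \<i> * z"
  define V where "V = complex_of_real (exp (- 2 * pi * A))"
  define u where "u = fourier_kernel z 1"
  define c where "c = complex_of_real (pi / A)"
  define k where "k t = exp_kernel A t * fourier_kernel z t" for t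
  note b = exp_kernel_partial_fractions[OF assms, folded b1_def b2_def c_def]
  have "V \<noteq> 0" "u \<noteq> 0"
    by (simp_all add: V_def u_def fourier_kernel_def)
  have exp_b: "exp b1 = V * u" "exp b2 = u / V" "exp (- b1) = 1 / (V * u)" "exp (- b2) = V / u"
    unfolding b1_def b2_def V_def u_def fourier_kernel_def
    by (simp_all add: exp_diff exp_minus of_real_exp field_simps flip: exp_add)
  have k_right: "k t = c * (exp (t *\<^sub>R b1) - V\<^sup>2 * exp (t *\<^sub>R b2))" if "t \<in> {0..1}" for t
    unfolding k_def c_def V_def b1_def b2_def by (rule exp_kernel_mult_fourier_kernel(1)[OF that])
  have k_left: "k t = c * (exp (t *\<^sub>R b2) - V\<^sup>2 * exp (t *\<^sub>R b1))" if "t \<in> {-1..0}" for t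
    unfolding k_def c_def V_def b1_def b2_def by (rule exp_kernel_mult_fourier_kernel(2)[OF that])
  have right: "(k has_integral c * ((exp b1 - 1) / b1 - V\<^sup>2 * ((exp b2 - 1) / b2))) {0..1}"
  proof (rule has_integral_eq[OF k_right[symmetric]])
    show "((\<lambda>t. c * (exp (t *\<^sub>R b1) - V\<^sup>2 * exp (t *\<^sub>R b2))) has_integral
        c * ((exp b1 - 1) / b1 - V\<^sup>2 * ((exp b2 - 1) / b2))) {0..1}"
      using has_integral_mult_right[OF has_integral_diff[OF has_integral_exp_scaleR[OF b(1), of 0 1]
          has_integral_mult_right[OF has_integral_exp_scaleR[OF b(2), of 0 1], of "V\<^sup>2"]], of c]
      by simp
  qed
  have left: "(k has_integral c * ((1 - exp (- b2)) / b2 - V\<^sup>2 * ((1 - exp (- b1)) / b1))) {-1..0}"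
  proof (rule has_integral_eq[OF k_left[symmetric]])
    show "((\<lambda>t. c * (exp (t *\<^sub>R b2) - V\<^sup>2 * exp (t *\<^sub>R b1))) has_integral
        c * ((1 - exp (- b2)) / b2 - V\<^sup>2 * ((1 - exp (- b1)) / b1))) {-1..0}"
      using has_integral_mult_right[OF has_integral_diff[OF has_integral_exp_scaleR[OF b(2), of "-1" 0]
          has_integral_mult_right[OF has_integral_exp_scaleR[OF b(1), of "-1" 0], of "V\<^sup>2"]], of c]
      by simp
  qed
  have "c_fourier (exp_kernel A) z = integral {-1..1} k"
    unfolding k_def by (rule c_fourier_eq_integral_Icc[OF bounded_compact_supp_exp_kernel[OF \<open>0 < A\<close>]])
  also have "\<dots> = c * ((1 - exp (- b2)) / b2 - V\<^sup>2 * ((1 - exp (- b1)) / b1))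
      + c * ((exp b1 - 1) / b1 - V\<^sup>2 * ((exp b2 - 1) / b2))"
    by (rule integral_unique, rule has_integral_combine[OF _ _ left right]) auto
  also have "\<dots> = (1 - V * u) * (1 - V / u) * (c * (1 / b2 - 1 / b1))"
    unfolding exp_b using \<open>V \<noteq> 0\<close> \<open>u \<noteq> 0\<close> b(1,2) by (simp add: field_simps power2_eq_square)
  finally show ?thesis
    unfolding b(3) by (simp add: V_def u_def)
qed

lemma norm_mult_minus_one_le:
  fixes x y :: "'a::real_normed_algebra_1"
  shows "norm (x * y - 1) \<le> (1 + norm (x - 1)) * (1 + norm (y - 1)) - 1"
proof -
  have split: "x * y - 1 = (x - 1) * (y - 1) + (x - 1) + (y - 1)"
    by (simp add: algebra_simps)
  have "norm (x * y - 1) \<le> norm ((x - 1) * (y - 1)) + norm (x - 1) + norm (y - 1)"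
    unfolding split using norm_triangle_ineq[of "(x - 1) * (y - 1) + (x - 1)" "y - 1"]
      norm_triangle_ineq[of "(x - 1) * (y - 1)" "x - 1"] by linarith
  also have "\<dots> \<le> norm (x - 1) * norm (y - 1) + norm (x - 1) + norm (y - 1)"
    by (simp add: norm_mult_ineq)
  finally show ?thesis
    by (simp add: algebra_simps)
qed

lemma norm_power_minus_one_le:
  fixes x :: "'a::real_normed_algebra_1"
  shows "norm (x ^ n - 1) \<le> (1 + norm (x - 1)) ^ n - 1"
proof (induction n)
  case (Suc n)
  have "norm (x * x ^ n - 1) \<le> (1 + norm (x - 1)) * (1 + norm (x ^ n - 1)) - 1"
    by (rule norm_mult_minus_one_le)
  also have "\<dots> \<le> (1 + norm (x - 1)) * (1 + norm (x - 1)) ^ n - 1"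
    using Suc.IH by (simp add: mult_left_mono)
  finally show ?case
    by simp
qed simp

lemma norm_mult3_minus_one_le:
  fixes x y w :: "'a::real_normed_algebra_1"
  assumes "norm (x - 1) \<le> e" "norm (y - 1) \<le> e" "norm (w - 1) \<le> e" "e \<le> 1"
  shows "norm (x * y * w - 1) \<le> 7 * e"
proof -
  have "0 \<le> e"
    using assms(1) norm_ge_zero by (rule order_trans[rotated])
  have "(1 + norm (x - 1)) * (1 + norm (y - 1)) \<le> (1 + e) * (1 + e)"
    using assms(1,2) \<open>0 \<le> e\<close> by (intro mult_mono) simp_all
  then have "norm (x * y - 1) \<le> (1 + e) * (1 + e) - 1"
    using norm_mult_minus_one_le[of x y] by linarith
  then have "(1 + norm (x * y - 1)) * (1 + norm (w - 1)) \<le> (1 + e) * (1 + e) * (1 + e)"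
    using assms(3) \<open>0 \<le> e\<close> by (intro mult_mono) simp_all
  moreover have "e * e \<le> e" "e * e * e \<le> e * e"
    using assms(4) \<open>0 \<le> e\<close> by (simp_all add: mult_left_le)
  ultimately show ?thesis
    using norm_mult_minus_one_le[of "x * y" w] by (simp add: algebra_simps)
qed

lemma Re_power_pos:
  fixes w :: complex
  assumes "real n * cmod (w - 1) < 1 / 2"
  shows "0 < Re (w ^ n)"
proof -
  have "cmod (w ^ n - 1) \<le> (1 + cmod (w - 1)) ^ n - 1"
    by (rule norm_power_minus_one_le)
  also have "(1 + cmod (w - 1)) ^ n \<le> exp (cmod (w - 1)) ^ n"
    by (intro power_mono) simp_all
  also have "\<dots> = exp (real n * cmod (w - 1))"
    by (simp add: exp_of_nat_mult)
  also have "\<dots> \<le> 1 + 2 * (real n * cmod (w - 1))"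
    using assms by (intro real_exp_bound_lemma) simp_all
  finally have "cmod (w ^ n - 1) < 1"
    using assms by linarith
  moreover have "1 - cmod (w ^ n - 1) \<le> Re (w ^ n)"
    using abs_Re_le_cmod[of "w ^ n - 1"] by simp
  ultimately show ?thesis
    by linarith
qed

lemma norm_Re_div_minus_one_le:
  fixes q :: complex
  assumes "0 < Re q"
  shows "cmod (complex_of_real (Re q) / q - 1) \<le> \<bar>Im q\<bar> / Re q"
proof -
  have "Re q \<le> cmod q"
    by (rule complex_Re_le_cmod)
  have split: "complex_of_real (Re q) - q = - (\<i> * complex_of_real (Im q))"
    by (simp add: complex_eq_iff)
  have "q \<noteq> 0"
    using assms by auto
  then have "complex_of_real (Re q) / q - 1 = (complex_of_real (Re q) - q) / q"
    by (simp add: diff_divide_distrib)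
  then have "cmod (complex_of_real (Re q) / q - 1) = \<bar>Im q\<bar> / cmod q"
    unfolding split by (simp add: norm_divide norm_mult)
  also have "\<dots> \<le> \<bar>Im q\<bar> / Re q"
    using assms \<open>Re q \<le> cmod q\<close> by (intro divide_left_mono mult_pos_pos) auto
  finally show ?thesis .
qed

lemma inverse_power_le_max_powr:
  fixes x :: real
  assumes "m \<le> 2 * N"
  shows "1 / (x\<^sup>2 + 1) ^ N \<le> max 1 \<bar>x\<bar> powr (- real m)"
proof -
  define M where "M = max 1 \<bar>x\<bar>"
  have "1 \<le> M"
    by (simp add: M_def)
  have "M\<^sup>2 \<le> x\<^sup>2 + 1"
    by (cases "1 \<le> \<bar>x\<bar>") (auto simp: M_def max_def power2_eq_square)
  have "M ^ m \<le> M ^ (2 * N)"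
    using \<open>1 \<le> M\<close> assms by (rule power_increasing[rotated])
  also have "\<dots> = (M\<^sup>2) ^ N"
    by (simp add: power_mult)
  also have "\<dots> \<le> (x\<^sup>2 + 1) ^ N"
    using \<open>M\<^sup>2 \<le> x\<^sup>2 + 1\<close> by (intro power_mono) simp_all
  finally have "1 / (x\<^sup>2 + 1) ^ N \<le> 1 / M ^ m"
    using \<open>1 \<le> M\<close> by (intro divide_left_mono mult_pos_pos zero_less_power) (simp_all add: add_nonneg_pos)
  then show ?thesis
    using \<open>1 \<le> M\<close> by (simp add: M_def powr_minus powr_realpow divide_inverse)
qed

lemma norm_sq_add_one_le_Re:
  fixes z :: complex
  assumes "\<bar>Im z\<bar> \<le> H" "2 * H + 1 \<le> A"
  shows "(cmod z)\<^sup>2 + 1 \<le> Re (z\<^sup>2 + (complex_of_real A)\<^sup>2)"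
proof -
  have "0 \<le> H"
    using assms(1) by linarith
  have "(Im z)\<^sup>2 \<le> H\<^sup>2"
    using power_mono[OF assms(1) abs_ge_zero, of 2] by simp
  moreover have "(2 * H + 1)\<^sup>2 \<le> A\<^sup>2"
    using assms(2) \<open>0 \<le> H\<close> by (intro power_mono) simp_all
  moreover have "(2 * H + 1)\<^sup>2 = 4 * H\<^sup>2 + 4 * H + 1"
    by (simp add: power2_eq_square algebra_simps)
  ultimately have "2 * (Im z)\<^sup>2 + 1 \<le> A\<^sup>2"
    using \<open>0 \<le> H\<close> zero_le_power2[of H] by linarith
  moreover have "Re (z\<^sup>2 + (complex_of_real A)\<^sup>2) = (Re z)\<^sup>2 - (Im z)\<^sup>2 + A\<^sup>2"
    by (simp add: power2_eq_square)
  ultimately show ?thesis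
    using cmod_power2[of z] by linarith
qed

lemma abs_Im_le_Re:
  fixes z :: complex
  assumes "\<bar>Im z\<bar> \<le> H" "H \<le> A" "0 \<le> e" "H \<le> e * (A - H)"
  shows "\<bar>Im (z\<^sup>2 + (complex_of_real A)\<^sup>2)\<bar> \<le> e * Re (z\<^sup>2 + (complex_of_real A)\<^sup>2)"
proof -
  have "\<bar>Im (z\<^sup>2 + (complex_of_real A)\<^sup>2)\<bar> = 2 * \<bar>Re z\<bar> * \<bar>Im z\<bar>"
    by (simp add: power2_eq_square abs_mult)
  also have "\<dots> \<le> 2 * \<bar>Re z\<bar> * (e * (A - H))"
    using assms(1,4) by (intro mult_left_mono) simp_all
  also have "\<dots> = e * (2 * \<bar>Re z\<bar> * (A - H))"
    by (simp add: algebra_simps)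
  also have "\<dots> \<le> e * ((Re z)\<^sup>2 + (A - H)\<^sup>2)"
  proof -
    have "0 \<le> (\<bar>Re z\<bar> - (A - H))\<^sup>2"
      by simp
    then have "2 * \<bar>Re z\<bar> * (A - H) \<le> (Re z)\<^sup>2 + (A - H)\<^sup>2"
      by (simp add: power2_eq_square algebra_simps)
    then show ?thesis
      using assms(3) by (intro mult_left_mono)
  qed
  also have "\<dots> \<le> e * Re (z\<^sup>2 + (complex_of_real A)\<^sup>2)"
  proof -
    have "\<bar>Im z\<bar>\<^sup>2 \<le> H\<^sup>2"
      using assms(1) by (intro power_mono) simp_all
    moreover have "H * H \<le> A * H"
      using assms(1,2) by (intro mult_right_mono) simp_all
    ultimately have "(Re z)\<^sup>2 + (A - H)\<^sup>2 \<le> Re (z\<^sup>2 + (complex_of_real A)\<^sup>2)"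
      by (simp add: power2_eq_square algebra_simps)
    then show ?thesis
      using assms(3) by (intro mult_left_mono)
  qed
  finally show ?thesis .
qed

lemma norm_exp_kernel_reflection_factors_le:
  assumes "\<bar>Im z\<bar> \<le> H" "exp (- 2 * pi * (A - H)) \<le> e"
  shows "cmod (exp (- 2 * pi * A) * fourier_kernel z 1) \<le> e"
    and "cmod (exp (- 2 * pi * A) / fourier_kernel z 1) \<le> e"
proof -
  have "cmod (exp (- 2 * pi * A) * fourier_kernel z 1) = exp (- 2 * pi * A) * exp (2 * pi * Im z)"
    by (simp add: norm_mult norm_fourier_kernel)
  also have "\<dots> = exp (- 2 * pi * (A - Im z))"
    by (simp add: algebra_simps flip: exp_add)
  also have "\<dots> \<le> exp (- 2 * pi * (A - H))"
    using assms(1) by simp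
  finally show "cmod (exp (- 2 * pi * A) * fourier_kernel z 1) \<le> e"
    using assms(2) by simp
  have "cmod (exp (- 2 * pi * A) / fourier_kernel z 1) = exp (- 2 * pi * A) / exp (2 * pi * Im z)"
    by (simp add: norm_divide norm_fourier_kernel)
  also have "\<dots> = exp (- 2 * pi * (A + Im z))"
    by (simp add: algebra_simps flip: exp_diff)
  also have "\<dots> \<le> exp (- 2 * pi * (A - H))"
    using assms(1) by simp
  finally show "cmod (exp (- 2 * pi * A) / fourier_kernel z 1) \<le> e"
    using assms(2) by simp
qed

lemma norm_Re_mult_c_fourier_exp_kernel_minus_one_le:
  fixes z :: complex
  assumes "\<bar>Im z\<bar> \<le> H" "2 * H + 1 \<le> A" "0 \<le> e" "e \<le> 1"
    and "exp (- 2 * pi * (A - H)) \<le> e" "H \<le> e * (A - H)"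
  shows "cmod (Re (z\<^sup>2 + (complex_of_real A)\<^sup>2) * c_fourier (exp_kernel A) z - 1) \<le> 7 * e"
proof -
  define q where "q = z\<^sup>2 + (complex_of_real A)\<^sup>2"
  define V where "V = complex_of_real (exp (- 2 * pi * A))"
  define u where "u = fourier_kernel z 1"
  have "0 < Re q"
    using norm_sq_add_one_le_Re[OF assms(1,2)] zero_le_power2[of "cmod z"] unfolding q_def
    by linarith
  have "\<bar>Im z\<bar> < A" "0 < A" "H \<le> A"
    using assms(1,2) by linarith+
  have "\<bar>Im q\<bar> \<le> e * Re q"
    unfolding q_def by (rule abs_Im_le_Re[OF assms(1) \<open>H \<le> A\<close> assms(3,6)])
  then have "\<bar>Im q\<bar> / Re q \<le> e"
    using \<open>0 < Re q\<close> by (simp add: pos_divide_le_eq mult.commute)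
  then have "cmod (complex_of_real (Re q) / q - 1) \<le> e"
    using norm_Re_div_minus_one_le[OF \<open>0 < Re q\<close>] by linarith
  moreover have "cmod ((1 - V * u) - 1) \<le> e" "cmod ((1 - V / u) - 1) \<le> e"
    using norm_exp_kernel_reflection_factors_le[OF assms(1,5)] by (simp_all add: V_def u_def)
  moreover have "complex_of_real (Re q) * c_fourier (exp_kernel A) z
      = (1 - V * u) * (1 - V / u) * (complex_of_real (Re q) / q)"
    unfolding c_fourier_exp_kernel[OF \<open>0 < A\<close> \<open>\<bar>Im z\<bar> < A\<close>] V_def u_def q_def by simp
  ultimately show ?thesis
    using norm_mult3_minus_one_le assms(4) unfolding q_def by metis
qed

lemma exp_kernel_parameter_exists:
  assumes "0 \<le> H" "0 < e" "e \<le> 1"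
  shows "\<exists>A. 2 * H + 1 \<le> A \<and> exp (- 2 * pi * (A - H)) \<le> e \<and> H \<le> e * (A - H)"
proof (intro exI conjI)
  define D where "D = (H + 1) / e"
  have "(H + 1) * e \<le> H + 1"
    using assms by (simp add: mult_left_le)
  then have "H + 1 \<le> D"
    using assms(2) by (simp add: D_def pos_le_divide_eq)
  then show "2 * H + 1 \<le> H + D"
    by linarith
  show "H \<le> e * (H + D - H)"
    using assms by (simp add: D_def)
  have "1 * D \<le> 2 * pi * D"
    using \<open>H + 1 \<le> D\<close> assms(1) pi_gt3 by (intro mult_right_mono) simp_all
  have "1 / e \<le> D"
    using assms by (simp add: D_def divide_right_mono)
  also have "D \<le> 1 + 2 * pi * D"
    using \<open>1 * D \<le> 2 * pi * D\<close> by simp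
  also have "\<dots> \<le> exp (2 * pi * D)"
    by (rule exp_ge_add_one_self)
  finally show "exp (- 2 * pi * (H + D - H)) \<le> e"
    using assms by (simp add: exp_minus field_simps)
qed

lemma c_fourier_conv_power_exp_kernel_estimates:
  fixes z :: complex
  assumes "\<bar>Im z\<bar> \<le> H" "2 * H + 1 \<le> A" "0 \<le> e" "e \<le> 1"
    and "exp (- 2 * pi * (A - H)) \<le> e" "H \<le> e * (A - H)" "14 * real (Suc m) * e < 1"
  shows "0 < Re (c_fourier (conv_power (exp_kernel A) m) z)"
    and "cmod (c_fourier (conv_power (exp_kernel A) m) z) \<le> 8 ^ Suc m * max 1 (cmod z) powr (- real m)"
proof -
  have "0 < A"
    using assms(1,2) by linarith
  note power = c_fourier_conv_power[OF bounded_compact_supp_exp_kernel[OF \<open>0 < A\<close>] zero_le_one]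
  define p where "p = Re (z\<^sup>2 + (complex_of_real A)\<^sup>2)"
  define w where "w = p * c_fourier (exp_kernel A) z"
  have p: "(cmod z)\<^sup>2 + 1 \<le> p"
    unfolding p_def by (rule norm_sq_add_one_le_Re[OF assms(1,2)])
  then have "0 < p"
    using zero_le_power2[of "cmod z"] by linarith
  have w: "cmod (w - 1) \<le> 7 * e"
    unfolding w_def p_def by (rule norm_Re_mult_c_fourier_exp_kernel_minus_one_le[OF assms(1-6)])
  have fourier: "c_fourier (exp_kernel A) z = w / p"
    using \<open>0 < p\<close> by (simp add: w_def)
  have "real (Suc m) * cmod (w - 1) < 1 / 2"
    using mult_left_mono[OF w, of "real (Suc m)"] assms(7) by linarith
  then have "0 < Re (w ^ Suc m)"
    by (rule Re_power_pos)
  moreover have "c_fourier (conv_power (exp_kernel A) m) z = w ^ Suc m / complex_of_real (p ^ Suc m)"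
    unfolding power fourier by (simp add: power_divide del: power_Suc)
  ultimately show "0 < Re (c_fourier (conv_power (exp_kernel A) m) z)"
    using \<open>0 < p\<close> by (simp add: Re_divide_of_real del: power_Suc)
  have "cmod w \<le> 8"
    using norm_triangle_ineq2[of w 1] w assms(4) by simp
  then have "cmod (c_fourier (exp_kernel A) z) \<le> 8 / ((cmod z)\<^sup>2 + 1)"
    unfolding fourier norm_divide norm_of_real using \<open>0 < p\<close> p
    by (intro frac_le) (simp_all add: add_nonneg_pos)
  then have "cmod (c_fourier (exp_kernel A) z) ^ Suc m \<le> (8 / ((cmod z)\<^sup>2 + 1)) ^ Suc m"
    by (rule power_mono) simp
  then have "cmod (c_fourier (conv_power (exp_kernel A) m) z) \<le> 8 ^ Suc m * (1 / ((cmod z)\<^sup>2 + 1) ^ Suc m)"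
    unfolding power norm_power by (simp add: power_divide del: power_Suc)
  also have "\<dots> \<le> 8 ^ Suc m * max 1 (cmod z) powr (- real m)"
    using inverse_power_le_max_powr[of m "Suc m" "cmod z"] by (intro mult_left_mono) simp_all
  finally show "cmod (c_fourier (conv_power (exp_kernel A) m) z) \<le> 8 ^ Suc m * max 1 (cmod z) powr (- real m)" .
qed

theorem mainTheorem4:
  fixes H :: real and m :: nat
  assumes "H > 0"
  shows "\<exists>Psi :: real \<Rightarrow> complex.
           integrable lborel Psi \<and>
           (\<exists>K. compact K \<and> (\<forall>t. t \<notin> K \<longrightarrow> Psi t = 0)) \<and>
           (\<exists>C>0. \<forall>z\<in>strip H. cmod (c_fourier Psi z) \<le> C * (max 1 (cmod z)) powr (- real m)) \<and>
           (\<forall>z\<in>strip H. Re (c_fourier Psi z) > 0)"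
proof -
  define e where "e = 1 / (15 * real (Suc m))"
  have e: "0 < e" "e \<le> 1" "14 * real (Suc m) * e < 1"
    by (simp_all add: e_def)
  have "\<exists>A. 2 * H + 1 \<le> A \<and> exp (- 2 * pi * (A - H)) \<le> e \<and> H \<le> e * (A - H)"
    using assms e by (intro exp_kernel_parameter_exists) simp_all
  then obtain A where A: "2 * H + 1 \<le> A" "exp (- 2 * pi * (A - H)) \<le> e" "H \<le> e * (A - H)"
    by blast
  then have "0 < A"
    using assms by linarith
  obtain B where Psi: "bounded_compact_supp (real m + 1) B (conv_power (exp_kernel A) m)"
    using bounded_compact_supp_conv_power[OF bounded_compact_supp_exp_kernel[OF \<open>0 < A\<close>] zero_le_one, of m]
    by auto
  have "\<exists>K. compact K \<and> (\<forall>t. t \<notin> K \<longrightarrow> conv_power (exp_kernel A) m t = 0)"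
    by (intro exI[of _ "{- (real m + 1)..real m + 1}"]) (auto intro!: bounded_compact_suppD(3)[OF Psi])
  then show ?thesis
    using bounded_compact_supp_integrable[OF Psi]
      c_fourier_conv_power_exp_kernel_estimates[OF _ A(1) less_imp_le[OF e(1)] e(2) A(2,3) e(3)]
    unfolding strip_def by (intro exI[of _ "conv_power (exp_kernel A) m"]) (auto intro!: exI[of _ "8 ^ Suc m"])
qed

end
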